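(* Let $N$ states $i=1,\dots,N$ be observed at times $t=0,1$, with treatment version $M_i\in\{0,1,\dots,k\}$ applied at $t=1$, $A_i=\mathbb{I}(M_i>0)$, discrete covariate $X_i$, potential outcomes $Y_{it}(m)$, and (for untreated states) a potential version $M_i(1)\in\{1,\dots,k\}$. Assume consistency ($Y_{i1}=Y_{i1}(M_i)$, $Y_{i0}=Y_{i0}(0)$), the exclusion restriction (the potential outcome of an untreated state under $A=1$ is $Y_{i1}(M_i(1))$), and unit-level conditional parallel trends: for all $i$ and all $m=0,\dots,k$, $$Y_{i1}(m)=Y_{i0}+\Big[\sum_{j=1}^N\mathbb{I}(X_j=X_i,M_j=m)\Big]^{-1}\Big[\sum_{j=1}^N\mathbb{I}(X_j=X_i,M_j=m)(Y_{j1}-Y_{j0})\Big],$$ where all denominators are assumed positive. Define, for a state $i$ with $X_i=x$: if $A_i=1$, $\hat\psi_i^{DiD}=Y_{i1}-\hat Y_{i1}(0)$ with $\hat Y_{i1}(0)=Y_{i0}+[\sum_j(1-A_j)\mathbb{I}(X_j=x)]^{-1}\sum_j(1-A_j)\mathbb{I}(X_j=x)(Y_{j1}-Y_{j0})$; if $A_i=0$, $\hat\psi_i^{DiD}=\hat Y_{i1}(M_i(1))-Y_{i1}$ with $\hat Y_{i1}(M_i(1))=Y_{i0}+[\sum_jA_j\mathbb{I}(X_j=x)]^{-1}\sum_jA_j\mathbb{I}(X_j=x)(Y_{j1}-Y_{j0})$. Then for a treated state $i$, $\hat\psi_i^{DiD}=Y_{i1}(M_i)-Y_{i1}(0)$,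 and for an untreated state $i$ with $X_i=x$, $$\hat\psi_i^{DiD}=\sum_{m>0}\big(Y_{i1}(m)-Y_{i1}(0)\big)\Pr_N(M=m\mid A=1,X=x),$$ where $\Pr_N(M=m\mid A=1,X=x)=\sum_j\mathbb{I}(M_j=m,X_j=x)/\sum_jA_j\mathbb{I}(X_j=x)$.
   Context: $\Pr_N$ denotes empirical proportions over the $N$ states. *)

theory Defs
  imports Main Complex_Main
begin

text \<open>States are indexed by j < N. M j is the treatment version (0 = untreated),
  A j = [M j > 0], X j the discrete covariate, Y0 j and Y1 j the observed outcomes.\<close>

definition cnt_XM :: "nat \<Rightarrow> (nat \<Rightarrow> nat) \<Rightarrow> (nat \<Rightarrow> 'x) \<Rightarrow> 'x \<Rightarrow> nat \<Rightarrow> real" where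
  "cnt_XM N M X x m = (\<Sum>j<N. of_bool (X j = x \<and> M j = m))"

definition cnt_XA :: "nat \<Rightarrow> (nat \<Rightarrow> nat) \<Rightarrow> (nat \<Rightarrow> 'x) \<Rightarrow> 'x \<Rightarrow> bool \<Rightarrow> real" where
  "cnt_XA N M X x a = (\<Sum>j<N. of_bool ((0 < M j) = a \<and> X j = x))"

definition avg_change_XA ::
  "nat \<Rightarrow> (nat \<Rightarrow> nat) \<Rightarrow> (nat \<Rightarrow> 'x) \<Rightarrow> (nat \<Rightarrow> real) \<Rightarrow> (nat \<Rightarrow> real) \<Rightarrow> 'x \<Rightarrow> bool \<Rightarrow> real" where
  "avg_change_XA N M X Y0 Y1 x a =
     (\<Sum>j<N. of_bool ((0 < M j) = a \<and> X j = x) * (Y1 j - Y0 j)) / cnt_XA N M X x a"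

definition psi_DiD ::
  "nat \<Rightarrow> (nat \<Rightarrow> nat) \<Rightarrow> (nat \<Rightarrow> 'x) \<Rightarrow> (nat \<Rightarrow> real) \<Rightarrow> (nat \<Rightarrow> real) \<Rightarrow> nat \<Rightarrow> real" where
  "psi_DiD N M X Y0 Y1 i =
     (if 0 < M i
      then Y1 i - (Y0 i + avg_change_XA N M X Y0 Y1 (X i) False)
      else (Y0 i + avg_change_XA N M X Y0 Y1 (X i) True) - Y1 i)"

definition PrN_M_given_A1_X :: "nat \<Rightarrow> (nat \<Rightarrow> nat) \<Rightarrow> (nat \<Rightarrow> 'x) \<Rightarrow> nat \<Rightarrow> 'x \<Rightarrow> real" where
  "PrN_M_given_A1_X N M X m x =
     (\<Sum>j<N. of_bool (M j = m \<and> X j = x)) / (\<Sum>j<N. of_bool (0 < M j) * of_bool (X j = x))"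

end

theory Submission
  imports Defs
begin

text \<open>Under unit-level parallel trends the counterfactual change of state i under version m
  is the empirical average change in its (covariate, version) cell. For a treated state the
  estimator subtracts the change of the untreated cell, which is exactly Y_i1(0) - Y_i0. For an
  untreated state the estimator uses the average change of all treated states with the same
  covariate; splitting the treated states by version exhibits it as the average of the
  per-version cell changes weighted by Pr_N(M = m | A = 1, X = x), and since these weights
  sum to one, subtracting the untreated cell change Y_i1 - Y_i0 distributes over the weights.\<close>

definition avg_change_XM ::
  "nat \<Rightarrow> (nat \<Rightarrow> nat) \<Rightarrow> (nat \<Rightarrow> 'x) \<Rightarrow> (nat \<Rightarrow> real) \<Rightarrow> (nat \<Rightarrow> real) \<Rightarrow> 'x \<Rightarrow> nat \<Rightarrow> real" where
  "avg_change_XM N M X Y0 Y1 x m =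
     (\<Sum>j<N. of_bool (X j = x \<and> M j = m) * (Y1 j - Y0 j)) / cnt_XM N M X x m"

lemma sum_treated_eq_sum_versions:
  fixes M :: "nat \<Rightarrow> nat" and k :: nat and f :: "nat \<Rightarrow> real"
  assumes "\<forall>j<N. M j \<le> k"
  shows "(\<Sum>j<N. of_bool (0 < M j \<and> X j = x) * f j)
       = (\<Sum>m\<in>{1..k}. \<Sum>j<N. of_bool (X j = x \<and> M j = m) * f j)"
proof -
  have "of_bool (0 < M j \<and> X j = x) * f j
      = (\<Sum>m\<in>{1..k}. of_bool (X j = x \<and> M j = m) * f j)" if "j < N" for j
  proof -
    from assms that have "M j \<le> k" by simp
    have "(\<Sum>m\<in>{1..k}. of_bool (X j = x \<and> M j = m) * f j)
        = (\<Sum>m\<in>{1..k}. if m = M j then of_bool (X j = x) * f j else 0)"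
      by (rule sum.cong) auto
    also have "\<dots> = of_bool (0 < M j \<and> X j = x) * f j"
      using \<open>M j \<le> k\<close> by (subst sum.delta) (auto simp: Suc_le_eq)
    finally show ?thesis by (rule sym)
  qed
  then have "(\<Sum>j<N. of_bool (0 < M j \<and> X j = x) * f j)
      = (\<Sum>j<N. \<Sum>m\<in>{1..k}. of_bool (X j = x \<and> M j = m) * f j)"
    by (intro sum.cong) simp_all
  also have "\<dots> = (\<Sum>m\<in>{1..k}. \<Sum>j<N. of_bool (X j = x \<and> M j = m) * f j)"
    by (rule sum.swap)
  finally show ?thesis .
qed

lemma cnt_XA_True_eq_sum_cnt_XM:
  assumes "\<forall>j<N. M j \<le> k"
  shows "cnt_XA N M X x True = (\<Sum>m\<in>{1..k}. cnt_XM N M X x m)"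
  using sum_treated_eq_sum_versions[OF assms, of X x "\<lambda>_. 1"]
  by (simp add: cnt_XA_def cnt_XM_def)

lemma PrN_M_given_A1_X_eq:
  "PrN_M_given_A1_X N M X m x = cnt_XM N M X x m / cnt_XA N M X x True"
  unfolding PrN_M_given_A1_X_def cnt_XM_def cnt_XA_def
  by (intro arg_cong2[where f = "(/)"] sum.cong) auto

lemma sum_PrN_M_given_A1_X:
  assumes "\<forall>j<N. M j \<le> k" and "cnt_XA N M X x True \<noteq> 0"
  shows "(\<Sum>m\<in>{1..k}. PrN_M_given_A1_X N M X m x) = 1"
  using assms
  by (simp add: PrN_M_given_A1_X_eq cnt_XA_True_eq_sum_cnt_XM flip: sum_divide_distrib)

text \<open>No positivity is needed: an empty cell has count zero and also zero total change.\<close>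
lemma avg_change_XM_mult_cnt_XM:
  "avg_change_XM N M X Y0 Y1 x m * cnt_XM N M X x m
     = (\<Sum>j<N. of_bool (X j = x \<and> M j = m) * (Y1 j - Y0 j))"
proof (cases "cnt_XM N M X x m = 0")
  case True
  then have "\<forall>j<N. \<not> (X j = x \<and> M j = m)"
    by (auto simp: cnt_XM_def sum_nonneg_eq_0_iff)
  then have "(\<Sum>j<N. of_bool (X j = x \<and> M j = m) * (Y1 j - Y0 j)) = 0"
    by (intro sum.neutral) auto
  with True show ?thesis
    by (simp add: avg_change_XM_def)
qed (simp add: avg_change_XM_def)

lemma avg_change_XA_False_eq_avg_change_XM_0:
  "avg_change_XA N M X Y0 Y1 x False = avg_change_XM N M X Y0 Y1 x 0"
  unfolding avg_change_XA_def avg_change_XM_def cnt_XA_def cnt_XM_def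
  by (intro arg_cong2[where f = "(/)"] sum.cong) auto

lemma avg_change_XA_True_eq_weighted_avg_change_XM:
  assumes "\<forall>j<N. M j \<le> k"
  shows "avg_change_XA N M X Y0 Y1 x True
       = (\<Sum>m\<in>{1..k}. avg_change_XM N M X Y0 Y1 x m * PrN_M_given_A1_X N M X m x)"
proof -
  have "avg_change_XA N M X Y0 Y1 x True
      = (\<Sum>m\<in>{1..k}. \<Sum>j<N. of_bool (X j = x \<and> M j = m) * (Y1 j - Y0 j))
          / cnt_XA N M X x True"
    using sum_treated_eq_sum_versions[OF assms, of X x "\<lambda>j. Y1 j - Y0 j"]
    by (simp add: avg_change_XA_def)
  also have "\<dots> = (\<Sum>m\<in>{1..k}. avg_change_XM N M X Y0 Y1 x m * cnt_XM N M X x m)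
          / cnt_XA N M X x True"
    by (simp only: avg_change_XM_mult_cnt_XM)
  finally show ?thesis
    by (simp add: PrN_M_given_A1_X_eq sum_divide_distrib)
qed

theorem proposition4:
  fixes N k :: nat
    and M :: "nat \<Rightarrow> nat"          \<comment> \<open>observed treatment version M_i\<close>
    and M1 :: "nat \<Rightarrow> nat"         \<comment> \<open>potential version M_i(1) of untreated states\<close>
    and X :: "nat \<Rightarrow> 'x"
    and Y0 Y1 :: "nat \<Rightarrow> real"      \<comment> \<open>observed outcomes Y_i0, Y_i1\<close>
    and Y1pot :: "nat \<Rightarrow> nat \<Rightarrow> real" \<comment> \<open>Y_i1(m)\<close>
    and Y0pot :: "nat \<Rightarrow> real"       \<comment> \<open>Y_i0(0)\<close>
    and Y1A :: "nat \<Rightarrow> real"         \<comment> \<open>potential outcome at t=1 under A=1\<close>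
  assumes versions: "\<forall>i<N. M i \<le> k"
    and M1_range: "\<forall>i<N. M i = 0 \<longrightarrow> M1 i \<in> {1..k}"
    and consistency1: "\<forall>i<N. Y1 i = Y1pot i (M i)"
    and consistency0: "\<forall>i<N. Y0 i = Y0pot i"
    and exclusion: "\<forall>i<N. M i = 0 \<longrightarrow> Y1A i = Y1pot i (M1 i)"
    and pos_XM: "\<forall>i<N. \<forall>m\<le>k. cnt_XM N M X (X i) m > 0"
    and pos_XA: "\<forall>i<N. cnt_XA N M X (X i) True > 0 \<and> cnt_XA N M X (X i) False > 0"
    and parallel_trends: "\<forall>i<N. \<forall>m\<le>k.
        Y1pot i m = Y0 i + (\<Sum>j<N. of_bool (X j = X i \<and> M j = m) * (Y1 j - Y0 j))
                           / cnt_XM N M X (X i) m"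
  shows "\<forall>i<N.
     (0 < M i \<longrightarrow> psi_DiD N M X Y0 Y1 i = Y1pot i (M i) - Y1pot i 0) \<and>
     (M i = 0 \<longrightarrow> psi_DiD N M X Y0 Y1 i =
        (\<Sum>m\<in>{1..k}. (Y1pot i m - Y1pot i 0) * PrN_M_given_A1_X N M X m (X i)))"
proof (intro allI impI conjI)
  fix i assume "i < N"
  let ?a = "avg_change_XM N M X Y0 Y1 (X i)"
  let ?P = "\<lambda>m. PrN_M_given_A1_X N M X m (X i)"
  have trend: "Y1pot i m = Y0 i + ?a m" if "m \<le> k" for m
    using parallel_trends \<open>i < N\<close> that by (simp add: avg_change_XM_def)
  have untreated_change: "Y1pot i 0 = Y0 i + avg_change_XA N M X Y0 Y1 (X i) False"
    using trend[of 0] by (simp add: avg_change_XA_False_eq_avg_change_XM_0)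
  show "psi_DiD N M X Y0 Y1 i = Y1pot i (M i) - Y1pot i 0" if "0 < M i"
    using that untreated_change consistency1 \<open>i < N\<close> by (simp add: psi_DiD_def)
  show "psi_DiD N M X Y0 Y1 i = (\<Sum>m\<in>{1..k}. (Y1pot i m - Y1pot i 0) * ?P m)" if "M i = 0"
  proof -
    have "(\<Sum>m\<in>{1..k}. (Y1pot i m - Y1pot i 0) * ?P m) = (\<Sum>m\<in>{1..k}. (?a m - ?a 0) * ?P m)"
      by (intro sum.cong) (simp_all add: trend)
    also have "\<dots> = (\<Sum>m\<in>{1..k}. ?a m * ?P m) - ?a 0 * (\<Sum>m\<in>{1..k}. ?P m)"
      by (simp add: left_diff_distrib sum_subtractf sum_distrib_left)
    also have "\<dots> = avg_change_XA N M X Y0 Y1 (X i) True - ?a 0"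
    proof -
      have "cnt_XA N M X (X i) True \<noteq> 0"
        using pos_XA \<open>i < N\<close> by auto
      then have "(\<Sum>m\<in>{1..k}. ?P m) = 1"
        by (rule sum_PrN_M_given_A1_X[OF versions])
      then show ?thesis
        by (simp only: avg_change_XA_True_eq_weighted_avg_change_XM[OF versions] mult_1_right)
    qed
    finally show ?thesis
      using that trend[of 0] consistency1 \<open>i < N\<close> by (simp add: psi_DiD_def)
  qed
qed

end
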